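(* Let $d\ge1$. There exist finitely many topologically closed connected subgroups $T_1,\dots,T_m$ of $\mathbb{T}^{2d}$, each satisfying $\dim\pi(T_j)<d$, and torsion points $p_1,\dots,p_m\in\mathbb{T}^{2d}_{\mathrm{tors}}$, such that $$\mathbb{T}^{2d}_{\mathrm{tors}}\cap V=\bigcup_{\sigma\in S_d}\bigl(\mathbb{T}^{2d}_{\mathrm{tors}}\cap T_\sigma\bigr)\ \cup\ \bigcup_{j=1}^m\bigl(\mathbb{T}^{2d}_{\mathrm{tors}}\cap p_j\cdot T_j\bigr).$$
   Context: $\mathbb{T}^k=\{z\in\mathbb{C}^k:|z_1|=\dots=|z_k|=1\}$ is the $k$-torus, a compact abelian Lie group under coordinatewise multiplication $z\cdot w=(z_1w_1,\dots,z_kw_k)$; $\mathbb{T}^k_{\mathrm{tors}}$ is its set of points of finite order. $V=\{z\in\mathbb{C}^{2d}:\sum_{j=1}^d z_j-\sum_{j=d+1}^{2d}z_j=0\}$. $\pi:\mathbb{T}^{2d}=\mathbb{T}^d\times\mathbb{T}^d\to\mathbb{T}^d$ is the projection $(z,w)\mapsto z$ onto the first $d$ coordinates, and $\dim$ denotes dimension as a Lie group. For a permutation $\sigma$ in the symmetric group $S_d$, $T_\sigma=\{(z_1,\dots,z_d,z_{\sigma(1)},\dots,z_{\sigma(d)}):|z_j|=1\}\subset\mathbb{T}^{2d}$. *)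

theory Defs
  imports "HOL-Analysis.Analysis"
begin

definition torus :: "(complex^'n) set" where
  "torus = {z. \<forall>j. cmod (z$j) = 1}"

definition torus2 :: "((complex^'n) \<times> (complex^'n)) set" where
  "torus2 = torus \<times> torus"

definition mult2 :: "(complex^'n) \<times> (complex^'n) \<Rightarrow> (complex^'n) \<times> (complex^'n) \<Rightarrow> (complex^'n) \<times> (complex^'n)" where
  "mult2 a b = ((\<chi> j. fst a $ j * fst b $ j), (\<chi> j. snd a $ j * snd b $ j))"

definition inv2 :: "(complex^'n) \<times> (complex^'n) \<Rightarrow> (complex^'n) \<times> (complex^'n)" where
  "inv2 a = ((\<chi> j. inverse (fst a $ j)), (\<chi> j. inverse (snd a $ j)))"

definition one2 :: "(complex^'n) \<times> (complex^'n)" where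
  "one2 = ((\<chi> j. 1), (\<chi> j. 1))"

definition tors2 :: "((complex^'n) \<times> (complex^'n)) set" where
  "tors2 = {p \<in> torus2. \<exists>n::nat. n > 0 \<and> (\<forall>j. (fst p $ j) ^ n = 1 \<and> (snd p $ j) ^ n = 1)}"

definition closed_connected_subgroup2 :: "((complex^'n) \<times> (complex^'n)) set \<Rightarrow> bool" where
  "closed_connected_subgroup2 H \<longleftrightarrow>
     H \<subseteq> torus2 \<and> one2 \<in> H \<and>
     (\<forall>a\<in>H. \<forall>b\<in>H. mult2 a b \<in> H) \<and> (\<forall>a\<in>H. inv2 a \<in> H) \<and>
     closed H \<and> connected H"

text \<open>Lie group dimension of a closed subgroup S of T^n: the dimension of its Lie algebra
  {v in R^n. exp(t v) in S for all real t}, where exp(v) = (e^{2 pi i v_j})_j.\<close>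
definition lie_dim :: "(complex^'n) set \<Rightarrow> nat" where
  "lie_dim S = dim {v :: real^'n. \<forall>t::real.
      (\<chi> j. exp (2 * complex_of_real pi * \<i> * complex_of_real (t * v$j))) \<in> S}"

definition Vset :: "((complex^'n) \<times> (complex^'n)) set" where
  "Vset = {p. (\<Sum>j\<in>UNIV. fst p $ j) - (\<Sum>j\<in>UNIV. snd p $ j) = 0}"

definition Tperm :: "('n \<Rightarrow> 'n) \<Rightarrow> ((complex^'n) \<times> (complex^'n)) set" where
  "Tperm \<sigma> = {(z, \<chi> j. z $ (\<sigma> j)) | z. z \<in> torus}"

definition coset2 :: "(complex^'n) \<times> (complex^'n) \<Rightarrow> ((complex^'n) \<times> (complex^'n)) set \<Rightarrow> ((complex^'n) \<times> (complex^'n)) set" where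
  "coset2 p H = mult2 p ` H"

end

theory Submission
  imports Defs "HOL-Computational_Algebra.Polynomial" "HOL-Number_Theory.Cong"
begin

text \<open>A torsion point of \<open>V\<close> is a vanishing signed sum \<open>\<Sum> z\<^sub>j - \<Sum> w\<^sub>j\<close> of \<open>2d\<close> roots of unity.
  Split it into minimal vanishing subsums. By (a weak form of) Mann's theorem, which rests on the
  Galois conjugations \<open>\<zeta> \<mapsto> \<zeta>\<^sup>a\<close> of roots of unity, within one subsum all ratios are roots of unity
  of order dividing \<open>(2d)!\<close>. So the point lies in a coset, by a torsion point of that order, of
  the subtorus on which coordinates in a common subsum agree; only finitely many such
  (subtorus, torsion point) pairs occur. If no subsum contains two \<open>z\<close>-coordinates, a counting
  argument pairs each \<open>z\<^sub>a\<close> with a single equal \<open>w\<^sub>b\<close>, i.e. the point lies on some \<open>T\<^sub>\<sigma>\<close>;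
  otherwise the subtorus identifies two \<open>z\<close>-coordinates and its projection has smaller dimension.\<close>

section \<open>Galois conjugation of roots of unity\<close>

definition ipoly :: "int poly \<Rightarrow> complex \<Rightarrow> complex" where
  "ipoly f z = poly (map_poly of_int f) z"

lemma map_poly_of_int_add:
  "map_poly (of_int :: int \<Rightarrow> complex) (f + g) = map_poly of_int f + map_poly of_int g"
  by (intro poly_eqI) (simp add: coeff_map_poly)

lemma map_poly_of_int_diff:
  "map_poly (of_int :: int \<Rightarrow> complex) (f - g) = map_poly of_int f - map_poly of_int g"
  by (intro poly_eqI) (simp add: coeff_map_poly)

lemma map_poly_of_int_mult:
  "map_poly (of_int :: int \<Rightarrow> complex) (f * g) = map_poly of_int f * map_poly of_int g"
  by (intro poly_eqI) (simp add: coeff_map_poly coeff_mult)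

lemma ipoly_0 [simp]: "ipoly 0 z = 0"
  and ipoly_1 [simp]: "ipoly 1 z = 1"
  and ipoly_add [simp]: "ipoly (f + g) z = ipoly f z + ipoly g z"
  and ipoly_diff [simp]: "ipoly (f - g) z = ipoly f z - ipoly g z"
  and ipoly_mult [simp]: "ipoly (f * g) z = ipoly f z * ipoly g z"
  and ipoly_smult [simp]: "ipoly (smult c f) z = of_int c * ipoly f z"
  and ipoly_pCons [simp]: "ipoly (pCons a f) z = of_int a + z * ipoly f z"
  and ipoly_monom [simp]: "ipoly (monom a n) z = of_int a * z ^ n"
  by (simp_all add: ipoly_def map_poly_of_int_add map_poly_of_int_diff map_poly_of_int_mult
      map_poly_smult map_poly_pCons map_poly_monom poly_monom)

lemma ipoly_sum [simp]: "ipoly (sum g A) z = (\<Sum>a\<in>A. ipoly (g a) z)"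
  by (induct A rule: infinite_finite_induct) auto

definition int_adjoin :: "complex \<Rightarrow> complex set" where
  "int_adjoin e = range (\<lambda>f. ipoly f e)"

lemma int_adjoin_ipoly [intro]: "ipoly f e \<in> int_adjoin e"
  unfolding int_adjoin_def by auto

lemma int_adjoin_add [intro]: "x \<in> int_adjoin e \<Longrightarrow> y \<in> int_adjoin e \<Longrightarrow> x + y \<in> int_adjoin e"
  unfolding int_adjoin_def by (auto simp flip: ipoly_add)

lemma int_adjoin_mult [intro]: "x \<in> int_adjoin e \<Longrightarrow> y \<in> int_adjoin e \<Longrightarrow> x * y \<in> int_adjoin e"
  unfolding int_adjoin_def by (auto simp flip: ipoly_mult)

lemma int_adjoin_of_int [intro]: "of_int a \<in> int_adjoin e"
  using int_adjoin_ipoly[of "[:a:]" e] by simp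

lemma int_adjoin_0 [intro]: "0 \<in> int_adjoin e"
  using int_adjoin_of_int[of 0 e] by simp

lemma int_adjoin_of_nat [intro]: "of_nat a \<in> int_adjoin e"
  using int_adjoin_of_int[of "int a" e] by simp

lemma int_adjoin_gen [intro]: "e \<in> int_adjoin e"
  using int_adjoin_ipoly[of "monom 1 1" e] by simp

lemma int_adjoin_power [intro]: "x \<in> int_adjoin e \<Longrightarrow> x ^ n \<in> int_adjoin e"
  by (induct n) (auto intro: int_adjoin_of_int[of 1, simplified])

lemma int_adjoin_sum [intro]: "(\<And>i. i \<in> A \<Longrightarrow> f i \<in> int_adjoin e) \<Longrightarrow> sum f A \<in> int_adjoin e"
  by (induct A rule: infinite_finite_induct) auto

lemma binomial_prime_expansion:
  fixes x y :: "'a::comm_ring_1"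
  assumes q: "prime q"
  shows "(x + y) ^ q = x ^ q + y ^ q
           + of_nat q * (\<Sum>k\<in>{1..<q}. of_nat ((q choose k) div q) * x ^ k * y ^ (q - k))"
proof -
  have q2: "q \<ge> 2" using q prime_ge_2_nat by blast
  have "(x + y) ^ q = (\<Sum>k\<le>q. of_nat (q choose k) * x ^ k * y ^ (q - k))"
    by (rule binomial_ring)
  also have "{..q} = insert 0 (insert q {1..<q})" using q2 by auto
  also have "(\<Sum>k\<in>insert 0 (insert q {1..<q}). of_nat (q choose k) * x ^ k * y ^ (q - k))
      = y ^ q + (x ^ q + (\<Sum>k\<in>{1..<q}. of_nat (q choose k) * x ^ k * y ^ (q - k)))"
    using q2 by (subst sum.insert; simp)+
  also have "(\<Sum>k\<in>{1..<q}. of_nat (q choose k) * x ^ k * y ^ (q - k))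
      = (\<Sum>k\<in>{1..<q}. of_nat q * (of_nat ((q choose k) div q) * x ^ k * y ^ (q - k)))"
  proof (intro sum.cong refl)
    fix k assume "k \<in> {1..<q}"
    then have "q choose k = q * ((q choose k) div q)"
      using dvd_choose_prime[of k q] q by auto
    then show "of_nat (q choose k) * x ^ k * y ^ (q - k)
        = of_nat q * (of_nat ((q choose k) div q) * x ^ k * y ^ (q - k))"
      by (metis of_nat_mult mult.assoc)
  qed
  finally show ?thesis by (simp add: sum_distrib_left algebra_simps)
qed

lemma prime_dvd_power_self_diff:
  fixes a :: int
  assumes q: "prime q"
  shows "int q dvd a ^ q - a"
proof -
  have nat_case: "int q dvd int n ^ q - int n" for n
  proof (induct n)
    case 0
    then show ?case using q prime_gt_0_nat by (simp add: power_0_left)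
  next
    case (Suc n)
    define S where "S = (\<Sum>k\<in>{1..<q}. of_nat ((q choose k) div q) * int n ^ k * 1 ^ (q - k))"
    have "int (Suc n) ^ q - int (Suc n) = (int n ^ q - int n) + int q * S"
      using binomial_prime_expansion[OF q, of "int n" 1] unfolding S_def by (simp add: ac_simps)
    then show ?case using Suc by (simp only:) (rule dvd_add, simp_all)
  qed
  define r where "r = a mod int q"
  have "r \<ge> 0" using q prime_gt_0_nat r_def by simp
  then have "int q dvd r ^ q - r" using nat_case[of "nat r"] by simp
  moreover have "int q dvd a ^ q - r ^ q"
  proof -
    have "(a ^ q) mod int q = (r ^ q) mod int q"
      unfolding r_def by (simp add: power_mod)
    then show ?thesis by (simp add: mod_eq_dvd_iff)
  qed
  moreover have "int q dvd r - a"
    unfolding r_def by (metis mod_eq_dvd_iff mod_mod_trivial)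
  moreover have "a ^ q - a = (a ^ q - r ^ q) + (r ^ q - r) + (r - a)" by simp
  ultimately show ?thesis by (metis dvd_add)
qed

lemma ipoly_power_prime:
  assumes q: "prime q"
  shows "\<exists>r\<in>int_adjoin e. ipoly f e ^ q = ipoly f (e ^ q) + of_nat q * r"
proof (induct f rule: pCons_induct)
  case 0
  then show ?case using q prime_gt_0_nat by (auto simp: power_0_left)
next
  case (pCons a f)
  obtain r where r: "r \<in> int_adjoin e" "ipoly f e ^ q = ipoly f (e ^ q) + of_nat q * r"
    using pCons(2) by blast
  obtain t where t: "a ^ q - a = int q * t"
    using prime_dvd_power_self_diff[OF q, of a] by (auto elim: dvdE)
  have at: "(of_int a :: complex) ^ q = of_int a + of_nat q * of_int t"
    using arg_cong[OF t, of "of_int :: int \<Rightarrow> complex"] by (simp add: algebra_simps)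
  define s where "s = (\<Sum>k\<in>{1..<q}. of_nat ((q choose k) div q) * of_int a ^ k * (e * ipoly f e) ^ (q - k))"
  have s: "s \<in> int_adjoin e" unfolding s_def by (intro int_adjoin_sum int_adjoin_mult) auto
  have "ipoly (pCons a f) e ^ q = (of_int a + e * ipoly f e) ^ q" by simp
  also have "\<dots> = of_int a ^ q + (e * ipoly f e) ^ q + of_nat q * s"
    unfolding s_def by (rule binomial_prime_expansion[OF q])
  also have "\<dots> = ipoly (pCons a f) (e ^ q) + of_nat q * (of_int t + e ^ q * r + s)"
    unfolding at power_mult_distrib r(2) by (simp add: algebra_simps)
  finally show ?case using r(1) s by blast
qed

definition is_min_int_poly :: "int poly \<Rightarrow> complex \<Rightarrow> bool" where
  "is_min_int_poly m e \<longleftrightarrow> m \<noteq> 0 \<and> ipoly m e = 0 \<and> content m = 1 \<and>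
      (\<forall>g. g \<noteq> 0 \<longrightarrow> ipoly g e = 0 \<longrightarrow> degree m \<le> degree g)"

lemma min_int_poly_exists:
  assumes "f \<noteq> 0" "ipoly f e = 0"
  obtains m where "is_min_int_poly m e"
proof -
  define P where "P n \<longleftrightarrow> (\<exists>g. g \<noteq> 0 \<and> ipoly g e = 0 \<and> degree g = n)" for n
  have "P (degree f)" using assms P_def by blast
  then have "P (LEAST n. P n)" by (rule LeastI)
  then obtain g where g: "g \<noteq> 0" "ipoly g e = 0" "degree g = (LEAST n. P n)"
    unfolding P_def by blast
  have g_min: "degree g \<le> degree h" if "h \<noteq> 0" "ipoly h e = 0" for h
    using g(3) that P_def by (auto intro: Least_le)
  define m where "m = primitive_part g"
  have "ipoly g e = of_int (content g) * ipoly m e"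
    unfolding m_def by (metis content_times_primitive_part ipoly_smult)
  then have "ipoly m e = 0" using g(1,2) by simp
  moreover have "m \<noteq> 0" "content m = 1" "degree m = degree g" using g(1) m_def by auto
  ultimately have "is_min_int_poly m e" using g_min unfolding is_min_int_poly_def by auto
  then show ?thesis by (rule that)
qed

lemma min_int_poly_degree:
  assumes "is_min_int_poly m e"
  shows "degree m \<ge> 1"
proof (rule ccontr)
  assume "\<not> degree m \<ge> 1"
  then have "m = [:coeff m 0:]" by (metis degree_0_id less_one not_less)
  moreover have "ipoly [:coeff m 0:] e = of_int (coeff m 0)" by simp
  ultimately show False using assms unfolding is_min_int_poly_def by (metis of_int_eq_0_iff pCons_0_0)
qed

lemma min_int_poly_pseudo_remainder:
  assumes m: "is_min_int_poly m e"
  obtains c r where "m dvd smult c f - r" "c = lead_coeff m ^ (Suc (degree f) - degree m)"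
    "r = 0 \<or> degree r < degree m" "ipoly r e = of_int c * ipoly f e"
proof -
  have m0: "m \<noteq> 0" using m is_min_int_poly_def by auto
  obtain s r where sr: "pseudo_divmod f m = (s, r)" by (metis surj_pair)
  define c where "c = lead_coeff m ^ (Suc (degree f) - degree m)"
  have eq: "smult c f = m * s + r" using pseudo_divmod(1)[OF m0 sr] c_def by simp
  moreover have "ipoly r e = of_int c * ipoly f e"
    using arg_cong[OF eq, of "\<lambda>g. ipoly g e"] m unfolding is_min_int_poly_def by simp
  moreover have "m dvd smult c f - r" using eq by simp
  ultimately show ?thesis using that pseudo_divmod(2)[OF m0 sr] c_def by blast
qed

lemma min_int_poly_dvd:
  assumes m: "is_min_int_poly m e" and f: "ipoly f e = 0"
  shows "m dvd f"
proof -
  obtain c r where dvd: "m dvd smult c f - r" and c: "c = lead_coeff m ^ (Suc (degree f) - degree m)"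
    and r: "r = 0 \<or> degree r < degree m" "ipoly r e = of_int c * ipoly f e"
    using min_int_poly_pseudo_remainder[OF m] .
  have "r = 0" using r f m unfolding is_min_int_poly_def by force
  then obtain s where "smult c f = m * s" using dvd by (auto elim: dvdE)
  have c0: "c \<noteq> 0" using c m unfolding is_min_int_poly_def by simp
  have "primitive_part (smult c f) = primitive_part (m * s)" using \<open>smult c f = m * s\<close> by simp
  then have "smult (unit_factor c) (primitive_part f) = m * primitive_part s"
    using m unfolding is_min_int_poly_def
    by (simp add: primitive_part_smult primitive_part_mult primitive_part_prim)
  then have "m dvd smult (unit_factor c) (smult (unit_factor c) (primitive_part f))"
    by (metis dvd_smult dvd_triv_left)
  moreover have "unit_factor c * unit_factor c = 1" using c0 by (simp add: unit_factor_int_def sgn_if)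
  ultimately have "m dvd primitive_part f" by simp
  also have "primitive_part f dvd f" by (metis content_times_primitive_part dvd_smult dvd_refl)
  finally show ?thesis .
qed

lemma min_int_poly_root_of_unity_lead_coeff:
  assumes m: "is_min_int_poly m e" and N: "N > 0" and eN: "e ^ N = 1"
  shows "\<bar>lead_coeff m\<bar> = 1"
proof -
  have "m dvd monom 1 N - 1" using min_int_poly_dvd[OF m] eN by simp
  then obtain B where B: "monom 1 N - 1 = m * B" by (rule dvdE)
  have "lead_coeff ((-1) + monom 1 N :: int poly) = lead_coeff (monom 1 N :: int poly)"
    by (rule lead_coeff_add_le) (use N in \<open>simp add: degree_monom_eq\<close>)
  then have "lead_coeff (monom 1 N - 1 :: int poly) = 1" by (metis lead_coeff_monom uminus_add_conv_diff)
  then have "lead_coeff m * lead_coeff B = 1" using B by (simp add: lead_coeff_mult)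
  then show ?thesis by (auto simp add: zmult_eq_1_iff)
qed

text \<open>If the minimal polynomial of \<open>e\<close> is monic up to sign, then no integer \<open>q \<ge> 2\<close> is
  invertible in \<open>\<int>[e]\<close>: a relation \<open>q g(e) = 1\<close> reduces modulo \<open>m\<close> to a nonzero integer
  polynomial of smaller degree vanishing at \<open>e\<close>, since its constant term is not divisible by \<open>q\<close>.\<close>
lemma int_adjoin_not_inverse:
  assumes m: "is_min_int_poly m e" and lc: "\<bar>lead_coeff m\<bar> = 1" and q: "q \<ge> (2::nat)"
    and x: "x \<in> int_adjoin e"
  shows "of_nat q * x \<noteq> 1"
proof
  assume qx: "of_nat q * x = 1"
  obtain g where g: "x = ipoly g e" using x unfolding int_adjoin_def by blast
  obtain c r where c: "c = lead_coeff m ^ (Suc (degree g) - degree m)"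
    and r: "r = 0 \<or> degree r < degree m" "ipoly r e = of_int c * ipoly g e"
    using min_int_poly_pseudo_remainder[OF m] .
  have c1: "\<bar>c\<bar> = 1" unfolding c using lc by (simp add: power_abs)
  define P where "P = smult (int q) r - [:c:]"
  have "ipoly P e = 0"
    unfolding P_def using r(2) qx g by (simp add: algebra_simps)
  moreover have "P \<noteq> 0"
  proof
    assume "P = 0"
    then have "int q * coeff r 0 = c" unfolding P_def by (metis coeff_0 coeff_diff coeff_pCons_0
        coeff_smult right_minus_eq)
    then have "int q dvd 1" using c1 by (metis dvd_abs_iff dvd_triv_left)
    then show False using q by simp
  qed
  moreover have "degree P < degree m"
  proof -
    have "degree m \<ge> 1" by (rule min_int_poly_degree[OF m])
    then have "degree (smult (int q) r) < degree m" "degree [:c:] < degree m" using r(1) by auto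
    then show ?thesis unfolding P_def by (metis degree_diff_less)
  qed
  ultimately show False using m unfolding is_min_int_poly_def by (meson leD)
qed

lemma min_int_poly_root_of_unity_exists:
  assumes N: "N > 0" and eN: "e ^ N = 1"
  obtains m where "is_min_int_poly m e" "m dvd monom 1 N - 1" "\<bar>lead_coeff m\<bar> = 1"
proof -
  have "coeff (monom 1 N - 1 :: int poly) N = 1" using N by simp
  then have "monom 1 N - 1 \<noteq> (0 :: int poly)" by (metis coeff_0 zero_neq_one)
  moreover have "ipoly (monom 1 N - 1) e = 0" using eN by simp
  ultimately obtain m where m: "is_min_int_poly m e" by (rule min_int_poly_exists)
  show ?thesis
    by (rule that[OF m min_int_poly_dvd[OF m] min_int_poly_root_of_unity_lead_coeff[OF m N eN]])
      (use eN in simp)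
qed

lemma root_of_unity_int_adjoin_not_inverse:
  assumes "N > 0" "e ^ N = 1" "q \<ge> (2::nat)" "x \<in> int_adjoin e"
  shows "of_nat q * x \<noteq> 1"
  using assms by (metis min_int_poly_root_of_unity_exists int_adjoin_not_inverse)

text \<open>The core of the irreducibility of cyclotomic polynomials. If \<open>e\<^sup>q\<close> were not a root of
  the minimal polynomial \<open>m\<close> of \<open>e\<close>, it would be a root of the cofactor \<open>B\<close> in
  \<open>X\<^sup>N - 1 = m B\<close>; then \<open>B(e)\<^sup>q \<in> q\<int>[e]\<close> by Frobenius, and differentiating \<open>X\<^sup>N - 1 = m B\<close> at \<open>e\<close>
  shows \<open>N\<^sup>q \<in> q\<int>[e]\<close>, which makes \<open>q\<close> invertible in \<open>\<int>[e]\<close> because \<open>q \<nmid> N\<close>.\<close>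
lemma ipoly_root_pow_prime:
  assumes N: "N > 0" and eN: "e ^ N = 1" and q: "prime q" "\<not> q dvd N" and f: "ipoly f e = 0"
  shows "ipoly f (e ^ q) = 0"
proof -
  obtain m where m: "is_min_int_poly m e" and "m dvd monom 1 N - 1"
    using min_int_poly_root_of_unity_exists[OF N eN] .
  then obtain B where XB: "monom 1 N - 1 = m * B" by (auto elim: dvdE)
  obtain h where fh: "f = m * h" using min_int_poly_dvd[OF m f] by (rule dvdE)
  show ?thesis
  proof (rule ccontr)
    assume "ipoly f (e ^ q) \<noteq> 0"
    then have mq: "ipoly m (e ^ q) \<noteq> 0" using fh by simp
    have "ipoly (monom 1 N - 1) (e ^ q) = 0"
      using eN by (simp flip: power_mult add: mult.commute[of q N] power_mult)
    then have Bq: "ipoly B (e ^ q) = 0" using XB mq by simp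
    have "monom (int N) (N - 1) = m * pderiv B + B * pderiv m"
      using arg_cong[OF XB, of pderiv] by (simp add: pderiv_mult pderiv_monom pderiv_diff)
    then have "ipoly (monom (int N) (N - 1)) e = ipoly (m * pderiv B + B * pderiv m) e" by simp
    then have D: "of_nat N * e ^ (N - 1) = ipoly B e * ipoly (pderiv m) e"
      using m unfolding is_min_int_poly_def by simp
    obtain r where r: "r \<in> int_adjoin e" "ipoly B e ^ q = ipoly B (e ^ q) + of_nat q * r"
      using ipoly_power_prime[OF q(1)] by blast
    define r' where "r' = r * ipoly (pderiv m) e ^ q * e ^ q"
    have r': "r' \<in> int_adjoin e" unfolding r'_def using r(1) by auto
    have "e ^ (N - 1) * e = 1" using N eN by (metis power_minus_mult)
    then have "(of_nat (N ^ q) :: complex) = of_nat N ^ q * (e ^ (N - 1) * e) ^ q" by simp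
    also have "\<dots> = (of_nat N * e ^ (N - 1)) ^ q * e ^ q" by (simp add: power_mult_distrib)
    also have "\<dots> = of_nat q * r'"
      unfolding D power_mult_distrib r(2) Bq r'_def by (simp add: mult.assoc)
    finally have Nq: "(of_nat (N ^ q) :: complex) = of_nat q * r'" .
    have "coprime (int (N ^ q)) (int q)"
      using q prime_imp_coprime[of q N] by (simp add: coprime_commute)
    then obtain u v where "u * int (N ^ q) + v * int q = 1"
      by (metis bezout_int gcd_int_def coprime_iff_gcd_eq_1)
    then have "of_int u * of_nat (N ^ q) + of_int v * of_nat q = (1 :: complex)"
      by (metis of_int_1 of_int_add of_int_mult of_int_of_nat_eq)
    then have "of_nat q * (of_int u * r' + of_int v) = (1 :: complex)"
      unfolding Nq by (simp add: algebra_simps)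
    moreover have "of_int u * r' + of_int v \<in> int_adjoin e" using r' by auto
    ultimately show False
      using root_of_unity_int_adjoin_not_inverse[OF N eN] q(1) prime_ge_2_nat by blast
  qed
qed

lemma ipoly_root_pow_coprime:
  assumes N: "N > 0" and a: "coprime a N" and eN: "e ^ N = 1" and f: "ipoly f e = 0"
  shows "ipoly f (e ^ a) = 0"
  using a eN f
proof (induct a arbitrary: e rule: less_induct)
  case (less a)
  show ?case
  proof (cases "a \<le> 1")
    case True
    then consider "a = 0" | "a = 1" by linarith
    then show ?thesis
    proof cases
      case 1
      then have "N = 1" using less(2) by simp
      then show ?thesis using less(3,4) 1 by simp
    qed (use less in simp)
  next
    case False
    then obtain q where q: "prime q" "q dvd a" using prime_factor_nat[of a] by auto
    obtain a' where a': "a = q * a'" using q(2) by (rule dvdE)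
    have qN: "\<not> q dvd N" using q less(2) by (metis coprime_common_divisor not_prime_unit)
    have "a' > 0" using a' False by (cases a') auto
    then have "a' < a" using a' prime_ge_2_nat[OF q(1)] by simp
    moreover have "coprime a' N" using less(2) a' by simp
    moreover have "(e ^ q) ^ N = 1" using less(3) by (metis power_mult mult.commute power_one)
    moreover have "ipoly f (e ^ q) = 0" by (rule ipoly_root_pow_prime[OF N less(3) q(1) qN less(4)])
    ultimately have "ipoly f ((e ^ q) ^ a') = 0" by (rule less(1))
    then show ?thesis using a' by (simp add: power_mult)
  qed
qed

section \<open>Minimal vanishing sums of roots of unity\<close>

definition unit_root :: "nat \<Rightarrow> complex" where
  "unit_root N = cis (2 * pi / real N)"

lemma unit_root_neq_0 [simp]: "unit_root N \<noteq> 0"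
  by (simp add: unit_root_def)

lemma norm_unit_root [simp]: "norm (unit_root N) = 1"
  by (simp add: unit_root_def)

lemma unit_root_pow_eq: "unit_root N ^ k = cis (2 * pi * real k / real N)"
  unfolding unit_root_def Complex.DeMoivre by (simp add: mult_ac)

lemma unit_root_pow_self [simp]: "N > 0 \<Longrightarrow> unit_root N ^ N = 1"
  unfolding unit_root_pow_eq by simp

lemma unit_root_pow_eq_1_iff:
  assumes N: "N > 0"
  shows "unit_root N ^ k = 1 \<longleftrightarrow> N dvd k"
proof -
  have "unit_root N ^ k = (unit_root N ^ N) ^ (k div N) * unit_root N ^ (k mod N)"
    by (simp flip: power_mult power_add)
  also have "\<dots> = cis (2 * pi * real (k mod N) / real N)"
    using N by (simp add: unit_root_pow_eq)
  finally have "unit_root N ^ k = 1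
      \<longleftrightarrow> cis (2 * pi * real (k mod N) / real N) = cis (2 * pi * real 0 / real N)" by simp
  also have "\<dots> \<longleftrightarrow> k mod N = 0"
    using Complex.bij_betw_roots_unity[OF N] N unfolding bij_betw_def inj_on_def
    by (metis lessThan_iff mod_less_divisor)
  finally show ?thesis by auto
qed

lemma root_of_unity_eq_unit_root_pow:
  assumes N: "N > 0" and v: "v ^ N = 1"
  obtains k where "k < N" "v = unit_root N ^ k"
  using Complex.bij_betw_roots_unity[OF N] v that unfolding bij_betw_def unit_root_pow_eq by auto

lemma unit_root_pow_cofactor:
  assumes "M > 0"
  shows "unit_root (p * M) ^ M = unit_root p"
  using assms unfolding unit_root_def Complex.DeMoivre by (simp add: field_simps)

lemma sum_unit_root_pow:
  assumes p: "p > 0"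
  shows "(\<Sum>s<p. unit_root p ^ (s * t)) = (if p dvd t then of_nat p else 0)"
proof -
  have eq: "unit_root p ^ (s * t) = (unit_root p ^ t) ^ s" for s
    by (simp only: mult.commute[of _ t] power_mult)
  show ?thesis
  proof (cases "p dvd t")
    case True
    then have "unit_root p ^ t = 1" using unit_root_pow_eq_1_iff[OF p] by simp
    then show ?thesis unfolding eq using True by simp
  next
    case False
    then have ne: "unit_root p ^ t \<noteq> 1" using unit_root_pow_eq_1_iff[OF p] by simp
    have "(unit_root p ^ t) ^ p = 1" using p by (simp flip: power_mult add: mult.commute power_mult)
    then show ?thesis unfolding eq geometric_sum[OF ne] using False by simp
  qed
qed

definition minimal_vanishing :: "('i \<Rightarrow> 'a::comm_monoid_add) \<Rightarrow> 'i set \<Rightarrow> bool" where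
  "minimal_vanishing f B \<longleftrightarrow> B \<noteq> {} \<and> sum f B = 0 \<and> (\<forall>C. C \<subset> B \<longrightarrow> C \<noteq> {} \<longrightarrow> sum f C \<noteq> 0)"

text \<open>Orthogonality of characters of \<open>\<int>/p\<close> extracts a residue class of exponents.\<close>
lemma sum_twisted_residue_class:
  fixes a :: "'i \<Rightarrow> complex" and e :: "'i \<Rightarrow> nat"
  assumes A: "finite A" and r: "r < p"
  shows "(\<Sum>s<p. unit_root p ^ (s * (p - r)) * (\<Sum>i\<in>A. a i * unit_root p ^ (s * e i)))
       = of_nat p * (\<Sum>i\<in>{i\<in>A. e i mod p = r}. a i)"
proof -
  have p: "p > 0" using r by simp
  have dvd_iff: "p dvd p - r + e i \<longleftrightarrow> e i mod p = r" for i
    using r by (metis Nat.add_diff_assoc2 add_increasing2 dvd_minus_mod mod_add_self1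
        mod_nat_eqI order.strict_implies_order zero_le)
  have "(\<Sum>s<p. unit_root p ^ (s * (p - r)) * (\<Sum>i\<in>A. a i * unit_root p ^ (s * e i)))
      = (\<Sum>i\<in>A. a i * (\<Sum>s<p. unit_root p ^ (s * (p - r + e i))))"
    by (simp add: sum_distrib_left power_add algebra_simps flip: sum.swap[of _ A])
  also have "\<dots> = (\<Sum>i\<in>A. of_nat p * (if e i mod p = r then a i else 0))"
    unfolding sum_unit_root_pow[OF p] dvd_iff by (intro sum.cong refl) simp
  also have "\<dots> = of_nat p * (\<Sum>i\<in>{i\<in>A. e i mod p = r}. a i)"
    using A by (simp add: sum.inter_filter sum_distrib_left)
  finally show ?thesis .
qed

text \<open>In Mann's argument the twists \<open>F s\<close> are the Galois conjugates \<open>\<zeta> \<mapsto> \<zeta>\<^sup>1\<^sup>+\<^sup>s\<^sup>M\<close> (\<open>N = p M\<close>) of a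
  vanishing sum, so they vanish whenever \<open>p \<nmid> 1 + s M\<close>. If \<open>p | M\<close> that is every \<open>s\<close>; otherwise
  exactly one \<open>s < p\<close> is missing, and it is recovered from an empty residue class of exponents,
  which exists when \<open>card A < p\<close>.\<close>
lemma twisted_sums_vanish:
  fixes a :: "'i \<Rightarrow> complex" and e :: "'i \<Rightarrow> nat"
  assumes A: "finite A" and p: "prime p" and small: "p dvd M \<or> card A < p"
    and F: "\<And>s. F s = (\<Sum>i\<in>A. a i * unit_root p ^ (s * e i))"
    and conj: "\<And>s. \<not> p dvd 1 + s * M \<Longrightarrow> F s = 0"
    and s: "s < p"
  shows "F s = 0"
proof (cases "p dvd 1 + s * M")
  case False
  then show ?thesis by (rule conj)
next
  case True
  have pM: "\<not> p dvd M"
  proof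
    assume "p dvd M"
    then have "p dvd 1" using True by (metis dvd_add_left_iff dvd_mult)
    then show False using p by simp
  qed
  then have cardA: "card A < p" using small by blast
  have unique: "s' = s" if "s' < p" "p dvd 1 + s' * M" for s'
  proof -
    have "[1 + s' * M = 1 + s * M] (mod p)" using that True by (simp add: cong_def dvd_eq_mod_eq_0)
    then have "[s' * M = s * M] (mod p)" by (simp only: cong_add_lcancel_nat)
    moreover have "coprime M p" using pM p prime_imp_coprime[of p M] by (simp add: coprime_commute)
    ultimately have "[s' = s] (mod p)" by (simp add: cong_mult_rcancel_nat)
    then show ?thesis using that(1) s by (rule cong_less_modulus_unique_nat)
  qed
  have "card ((\<lambda>i. e i mod p) ` A) < card {..<p}" using card_image_le[OF A, of "\<lambda>i. e i mod p"] cardA by simp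
  then have "\<not> {..<p} \<subseteq> (\<lambda>i. e i mod p) ` A" by (meson A card_mono finite_imageI not_le)
  then obtain r where r: "r < p" "r \<notin> (\<lambda>i. e i mod p) ` A" by blast
  have empty: "{i\<in>A. e i mod p = r} = {}" using r(2) by auto
  have "(\<Sum>s'<p. unit_root p ^ (s' * (p - r)) * F s') = 0"
    unfolding F sum_twisted_residue_class[OF A r(1)] empty by simp
  also have "(\<Sum>s'<p. unit_root p ^ (s' * (p - r)) * F s')
      = unit_root p ^ (s * (p - r)) * F s + (\<Sum>s'\<in>{..<p} - {s}. unit_root p ^ (s' * (p - r)) * F s')"
    using s by (simp add: sum.remove)
  also have "(\<Sum>s'\<in>{..<p} - {s}. unit_root p ^ (s' * (p - r)) * F s') = 0"
    using unique conj by (intro sum.neutral) auto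
  finally show ?thesis by simp
qed

lemma minimal_vanishing_reduce_order:
  fixes c :: "'i \<Rightarrow> int" and v :: "'i \<Rightarrow> complex"
  assumes A: "finite A" and N: "N > 0" and p: "prime p" "p dvd N" and small: "p\<^sup>2 dvd N \<or> card A < p"
    and vN: "\<forall>i\<in>A. v i ^ N = 1" and min: "minimal_vanishing (\<lambda>i. of_int (c i) * v i) A"
    and i0: "i0 \<in> A" "v i0 = 1"
  shows "\<forall>i\<in>A. v i ^ (N div p) = 1"
proof -
  define M where "M = N div p"
  have NpM: "N = p * M" using p(2) M_def by simp
  have M0: "M > 0" using NpM N by (cases M) auto
  define z where "z = unit_root N"
  have zM: "z ^ M = unit_root p" unfolding z_def NpM by (rule unit_root_pow_cofactor[OF M0])
  have "\<forall>i\<in>A. \<exists>k. v i = z ^ k"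
    using root_of_unity_eq_unit_root_pow[OF N] vN unfolding z_def by metis
  then obtain e where e: "\<forall>i\<in>A. v i = z ^ e i" by (metis bchoice)
  define F where "F s = (\<Sum>i\<in>A. of_int (c i) * v i * unit_root p ^ (s * e i))" for s
  have conj: "F s = 0" if "\<not> p dvd 1 + s * M" for s
  proof -
    define f where "f = (\<Sum>i\<in>A. monom (c i) (e i))"
    have "coprime (1 + s * M) p" using that p(1) prime_imp_coprime[of p] coprime_commute by blast
    moreover have "coprime (1 + s * M) M"
      by (metis coprime_add_one_left coprime_commute coprime_mult_left_iff add.commute)
    ultimately have "coprime (1 + s * M) N" unfolding NpM by simp
    moreover have "z ^ N = 1" unfolding z_def using N by simp
    moreover have "ipoly f z = 0"
      using min e unfolding f_def minimal_vanishing_def by simp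
    ultimately have "ipoly f (z ^ (1 + s * M)) = 0" by (rule ipoly_root_pow_coprime[OF N])
    have "(z ^ (1 + s * M)) ^ k = z ^ k * (z ^ M) ^ (s * k)" for k
      by (simp add: power_add algebra_simps flip: power_mult)
    then have "ipoly f (z ^ (1 + s * M)) = F s"
      unfolding f_def F_def ipoly_sum using e zM by (intro sum.cong refl) simp
    with \<open>ipoly f (z ^ (1 + s * M)) = 0\<close> show ?thesis by simp
  qed
  have "p dvd M \<or> card A < p"
    using small prime_gt_0_nat[OF p(1)] unfolding NpM power2_eq_square by auto
  then have F0: "F s = 0" if "s < p" for s
    by (rule twisted_sums_vanish[OF A p(1) _ _ conj that]) (simp add: F_def)
  define B where "B = {i\<in>A. e i mod p = 0}"
  have "of_nat p * (\<Sum>i\<in>B. of_int (c i) * v i) = (\<Sum>s<p. unit_root p ^ (s * (p - 0)) * F s)"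
    using sum_twisted_residue_class[OF A, of 0 p "\<lambda>i. of_int (c i) * v i" e] prime_gt_0_nat[OF p(1)]
    unfolding B_def F_def by simp
  also have "\<dots> = 0" using F0 by simp
  finally have "(\<Sum>i\<in>B. of_int (c i) * v i) = 0" using p(1) by simp
  moreover have "i0 \<in> B"
  proof -
    have "N dvd e i0" using e i0 unit_root_pow_eq_1_iff[OF N] unfolding z_def by simp
    then show ?thesis using p(2) i0(1) unfolding B_def by (simp add: dvd_trans[of p N])
  qed
  moreover have "B \<subseteq> A" unfolding B_def by auto
  ultimately have "B = A" using min unfolding minimal_vanishing_def by (metis empty_iff psubsetI)
  show ?thesis
  proof
    fix i assume i: "i \<in> A"
    then obtain t where "e i = p * t" using \<open>B = A\<close> unfolding B_def by auto
    then have "v i ^ M = (z ^ N) ^ t" using e i by (simp add: NpM mult_ac flip: power_mult)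
    then show "v i ^ (N div p) = 1" using N unfolding z_def M_def by simp
  qed
qed

lemma not_dvd_fact_imp_prime_factor:
  fixes N k :: nat
  assumes N: "N > 0" and nd: "\<not> N dvd fact k"
  obtains p where "prime p" "p dvd N" "p\<^sup>2 dvd N \<or> k < p"
proof (rule ccontr)
  assume H: "\<not> thesis"
  have "N dvd fact k"
  proof (rule multiplicity_le_imp_dvd)
    show "N \<noteq> 0" using N by simp
  next
    fix p :: nat assume p: "prime p"
    show "multiplicity p N \<le> multiplicity p (fact k)"
    proof (cases "p dvd N")
      case False
      then show ?thesis by (simp add: not_dvd_imp_multiplicity_0)
    next
      case True
      then have "\<not> p\<^sup>2 dvd N" "p \<le> k" using H p that by (meson not_le)+
      then have "multiplicity p N < 2"
        using N p by (intro multiplicity_lessI) (auto simp: not_prime_unit)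
      moreover have "1 \<le> multiplicity p (fact k)"
        using \<open>p \<le> k\<close> p by (intro multiplicity_geI) (auto simp: prime_dvd_fact_iff not_prime_unit)
      ultimately show ?thesis by simp
    qed
  qed
  then show False using nd by simp
qed

text \<open>Mann's theorem, in a weak form. Normalising \<open>u j = 1\<close>, the common order \<open>N\<close> of the terms is
  reduced one prime at a time until it divides \<open>(card A)!\<close>.\<close>
theorem minimal_vanishing_root_ratio_order:
  fixes c :: "'i \<Rightarrow> int" and u :: "'i \<Rightarrow> complex"
  assumes A: "finite A" and n: "n > 0" and un: "\<forall>i\<in>A. u i ^ n = 1"
    and min: "minimal_vanishing (\<lambda>i. of_int (c i) * u i) A" and j: "j \<in> A"
  shows "\<forall>i\<in>A. (u i / u j) ^ fact (card A) = 1"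
proof -
  have uj: "u j \<noteq> 0" using un j n by (metis power_0_left zero_neq_one neq0_conv)
  define v where "v i = u i / u j" for i
  have "(\<Sum>i\<in>B. of_int (c i) * v i) = (\<Sum>i\<in>B. of_int (c i) * u i) / u j" for B
    unfolding v_def by (simp add: sum_divide_distrib)
  then have vmin: "minimal_vanishing (\<lambda>i. of_int (c i) * v i) A"
    using min uj unfolding minimal_vanishing_def by simp
  have vj: "v j = 1" using uj v_def by simp
  have "\<forall>i\<in>A. v i ^ N = 1 \<Longrightarrow> \<forall>i\<in>A. v i ^ fact (card A) = 1" if "N > 0" for N
    using that
  proof (induct N rule: less_induct)
    case (less N)
    show ?case
    proof (cases "N dvd fact (card A)")
      case True
      then show ?thesis using less(2) by (auto elim!: dvdE simp: power_mult)
    next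
      case False
      then obtain p where p: "prime p" "p dvd N" "p\<^sup>2 dvd N \<or> card A < p"
        using not_dvd_fact_imp_prime_factor[OF less(3)] by blast
      have "\<forall>i\<in>A. v i ^ (N div p) = 1"
        by (rule minimal_vanishing_reduce_order[OF A less(3) p less(2) vmin j vj])
      moreover have "N div p < N" "N div p > 0"
        using less(3) p prime_gt_1_nat[OF p(1)] by (auto simp: dvd_div_eq_0_iff)
      ultimately show ?thesis using less(1) by blast
    qed
  qed
  moreover have "\<forall>i\<in>A. v i ^ n = 1" using un j unfolding v_def by (simp add: power_divide)
  ultimately show ?thesis using n unfolding v_def by blast
qed

lemma vanishing_sum_minimal_fibres:
  fixes f :: "'i \<Rightarrow> 'a::ab_group_add"
  assumes "finite U" "sum f U = 0"
  shows "\<exists>L. \<forall>i\<in>U. L i \<in> U \<and> L (L i) = L i \<and> minimal_vanishing f {j\<in>U. L j = L i}"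
  using assms
proof (induct "card U" arbitrary: U rule: less_induct)
  case less
  show ?case
  proof (cases "U = {}")
    case True
    then show ?thesis by simp
  next
    case False
    define Q where "Q C \<longleftrightarrow> C \<subseteq> U \<and> C \<noteq> {} \<and> sum f C = 0" for C
    have "Q U" using False less(3) Q_def by simp
    then obtain C where C: "Q C" and C_least: "\<And>C'. Q C' \<Longrightarrow> card C \<le> card C'"
      using ex_has_least_nat[of Q U card] by blast
    have finC: "finite C" using C less(2) Q_def finite_subset by blast
    have minC: "minimal_vanishing f C"
      unfolding minimal_vanishing_def
      using C C_least finC psubset_card_mono unfolding Q_def by (meson leD psubset_imp_subset subset_trans)
    obtain c where c: "c \<in> C" using C Q_def by blast
    have "sum f (U - C) = 0" using sum.subset_diff[of C U f] less(2,3) C Q_def by simp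
    moreover have "card (U - C) < card U"
      using C c less(2) Q_def by (metis card_Diff_subset card_gt_0_iff diff_less finC subset_empty)
    ultimately obtain L where L: "\<forall>i\<in>U - C. L i \<in> U - C \<and> L (L i) = L i \<and>
        minimal_vanishing f {j\<in>U - C. L j = L i}"
      using less(1) less(2) by blast
    define L' where "L' i = (if i \<in> C then c else L i)" for i
    have "L' i \<in> U \<and> L' (L' i) = L' i \<and> minimal_vanishing f {j\<in>U. L' j = L' i}" if i: "i \<in> U" for i
    proof (cases "i \<in> C")
      case True
      have "{j\<in>U. L' j = c} = C" using L c C unfolding L'_def Q_def by auto
      then show ?thesis using True c C minC unfolding L'_def Q_def by auto
    next
      case False
      have "{j\<in>U. L' j = L i} = {j\<in>U - C. L j = L i}" using L c i False unfolding L'_def by auto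
      then show ?thesis using L i False unfolding L'_def by auto
    qed
    then show ?thesis by blast
  qed
qed

section \<open>Torsion points of the hyperplane\<close>

text \<open>Points of \<open>\<T>\<^sup>2\<^sup>d\<close> are handled through their coordinates indexed by \<open>'d + 'd\<close>:
  \<open>Inl j\<close> is \<open>z\<^sub>j\<close> and \<open>Inr j\<close> is \<open>w\<^sub>j\<close>.\<close>
definition coord :: "(complex^'d) \<times> (complex^'d) \<Rightarrow> 'd + 'd \<Rightarrow> complex" where
  "coord x i = (case i of Inl j \<Rightarrow> fst x $ j | Inr j \<Rightarrow> snd x $ j)"

definition of_coords :: "('d + 'd \<Rightarrow> complex) \<Rightarrow> (complex^'d) \<times> (complex^'d)" where
  "of_coords f = ((\<chi> j. f (Inl j)), (\<chi> j. f (Inr j)))"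

definition coord_sign :: "'d + 'd \<Rightarrow> int" where
  "coord_sign i = (case i of Inl _ \<Rightarrow> 1 | Inr _ \<Rightarrow> -1)"

definition signed_coord :: "(complex^'d) \<times> (complex^'d) \<Rightarrow> 'd + 'd \<Rightarrow> complex" where
  "signed_coord x i = of_int (coord_sign i) * coord x i"

lemma coord_Inl [simp]: "coord x (Inl j) = fst x $ j"
  and coord_Inr [simp]: "coord x (Inr j) = snd x $ j"
  and coord_sign_Inl [simp]: "coord_sign (Inl j) = 1"
  and coord_sign_Inr [simp]: "coord_sign (Inr j) = -1"
  by (simp_all add: coord_def coord_sign_def)

lemma coord_of_coords [simp]: "coord (of_coords f) i = f i"
  unfolding coord_def of_coords_def by (cases i) auto

lemma of_coords_coord [simp]: "of_coords (coord x) = x"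
  unfolding of_coords_def coord_def by (cases x) (auto simp: vec_eq_iff)

lemma coord_eq_iff: "x = y \<longleftrightarrow> (\<forall>i. coord x i = coord y i)"
  by (metis ext of_coords_coord)

lemma coord_mult2 [simp]: "coord (mult2 a b) i = coord a i * coord b i"
  and coord_inv2 [simp]: "coord (inv2 a) i = inverse (coord a i)"
  and coord_one2 [simp]: "coord one2 i = 1"
  by (cases i; simp add: mult2_def inv2_def one2_def)+

lemma continuous_on_coord [continuous_intros]: "continuous_on S (\<lambda>x. coord x i)"
  by (cases i) (auto intro!: continuous_intros)

lemma torus2_iff: "x \<in> torus2 \<longleftrightarrow> (\<forall>i. norm (coord x i) = 1)"
  unfolding torus2_def torus_def coord_def by (cases x) (auto split: sum.splits)

lemma tors2_iff: "x \<in> tors2 \<longleftrightarrow> x \<in> torus2 \<and> (\<exists>n>0. \<forall>i. coord x i ^ n = 1)"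
  unfolding tors2_def coord_def by (auto split: sum.splits)

lemma Vset_iff: "x \<in> Vset \<longleftrightarrow> (\<Sum>i\<in>UNIV. signed_coord x i) = 0"
proof -
  have "(\<Sum>i\<in>UNIV. signed_coord x i)
      = (\<Sum>j\<in>UNIV. signed_coord x (Inl j)) + (\<Sum>j\<in>UNIV. signed_coord x (Inr j))"
    by (subst UNIV_Plus_UNIV[symmetric], subst sum.Plus) auto
  then show ?thesis unfolding Vset_def signed_coord_def by (simp add: sum_negf)
qed

lemma Tperm_subset_Vset:
  assumes "\<sigma> permutes UNIV"
  shows "Tperm \<sigma> \<subseteq> Vset"
proof
  fix x assume "x \<in> Tperm \<sigma>"
  then obtain z where x: "x = (z, \<chi> j. z $ \<sigma> j)" unfolding Tperm_def by blast
  have "(\<Sum>j\<in>UNIV. z $ \<sigma> j) = (\<Sum>j\<in>UNIV. z $ j)"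
    using sum.permute[OF assms, of "\<lambda>j. z $ j"] by (simp add: comp_def)
  then show "x \<in> Vset" unfolding Vset_def x by simp
qed

definition diag_subtorus :: "('d + 'd \<Rightarrow> 'd + 'd) \<Rightarrow> ((complex^'d) \<times> (complex^'d)) set" where
  "diag_subtorus L = {x \<in> torus2. \<forall>i. coord x i = coord x (L i)}"

lemma closed_diag_subtorus: "closed (diag_subtorus (L :: 'd::finite + 'd \<Rightarrow> 'd + 'd))"
proof -
  have "diag_subtorus L = (\<Inter>i. {x. norm (coord x i) = 1} \<inter> {x. coord x i = coord x (L i)})"
    unfolding diag_subtorus_def torus2_iff by auto
  then show ?thesis
    by (simp only:) (intro closed_INT ballI closed_Int closed_Collect_eq continuous_intros)
qed

text \<open>For idempotent \<open>L\<close> the subtorus is the image of \<open>\<real>\<^sup>2\<^sup>d\<close> under \<open>v \<mapsto> (e\<^sup>i\<^sup>v\<^sup>L\<^sup>(\<^sup>i\<^sup>))\<^sub>i\<close>.\<close>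
lemma connected_diag_subtorus:
  assumes L: "\<forall>i. L (L i) = L i"
  shows "connected (diag_subtorus (L :: 'd::finite + 'd \<Rightarrow> 'd + 'd))"
proof -
  define \<phi> :: "real^('d + 'd) \<Rightarrow> (complex^'d) \<times> (complex^'d)" where
    "\<phi> v = of_coords (\<lambda>i. cis (v $ L i))" for v
  have cont: "continuous_on UNIV \<phi>"
    unfolding \<phi>_def of_coords_def by (intro continuous_intros)
  have "diag_subtorus L = \<phi> ` UNIV"
  proof
    show "\<phi> ` UNIV \<subseteq> diag_subtorus L"
      unfolding diag_subtorus_def torus2_iff \<phi>_def using L by auto
  next
    show "diag_subtorus L \<subseteq> \<phi> ` UNIV"
    proof
      fix x assume x: "x \<in> diag_subtorus L"
      have "cis (Arg z) = z" if "norm z = 1" for z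
        using that cis_Arg[of z] by (cases "z = 0") (auto simp: sgn_eq)
      then have "coord (\<phi> (\<chi> i. Arg (coord x i))) i = coord x i" for i
        using x unfolding \<phi>_def diag_subtorus_def torus2_iff by simp
      then have "x = \<phi> (\<chi> i. Arg (coord x i))" by (simp add: coord_eq_iff)
      then show "x \<in> \<phi> ` UNIV" by blast
    qed
  qed
  then show ?thesis using connected_continuous_image[OF cont connected_UNIV] by simp
qed

lemma closed_connected_subgroup2_diag_subtorus:
  assumes "\<forall>i. L (L i) = L i"
  shows "closed_connected_subgroup2 (diag_subtorus (L :: 'd::finite + 'd \<Rightarrow> 'd + 'd))"
  unfolding closed_connected_subgroup2_def
proof (intro conjI ballI closed_diag_subtorus connected_diag_subtorus[OF assms])
  show "diag_subtorus L \<subseteq> torus2" unfolding diag_subtorus_def by blast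
  show "one2 \<in> diag_subtorus L" unfolding diag_subtorus_def torus2_iff by simp
  show "mult2 a b \<in> diag_subtorus L" "inv2 a \<in> diag_subtorus L"
    if "a \<in> diag_subtorus L" "b \<in> diag_subtorus L" for a b
    using that unfolding diag_subtorus_def torus2_iff by (auto simp: norm_mult norm_inverse)
qed

text \<open>If \<open>L\<close> identifies \<open>z\<^sub>a\<close> with \<open>z\<^sub>b\<close>, every one-parameter subgroup \<open>t \<mapsto> e\<^sup>2\<^sup>\<pi>\<^sup>i\<^sup>t\<^sup>v\<close> of the
  projection satisfies \<open>v\<^sub>a = v\<^sub>b\<close> (otherwise \<open>t = 1 / (2 (v\<^sub>a - v\<^sub>b))\<close> gives \<open>e\<^sup>\<pi>\<^sup>i = 1\<close>), so its Lie
  algebra lies in a hyperplane.\<close>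
lemma lie_dim_diag_subtorus_less:
  assumes ab: "a \<noteq> b" "L (Inl a) = L (Inl b)"
  shows "lie_dim (fst ` diag_subtorus (L :: 'd::finite + 'd \<Rightarrow> 'd + 'd)) < CARD('d)"
proof -
  define S where "S = {v :: real^'d. \<forall>t::real.
      (\<chi> j. exp (2 * complex_of_real pi * \<i> * complex_of_real (t * v $ j))) \<in> fst ` diag_subtorus L}"
  have fst_eq: "z $ a = z $ b" if z: "z \<in> fst ` diag_subtorus L" for z
  proof -
    obtain x where x: "x \<in> diag_subtorus L" "z = fst x" using z by blast
    then have "\<forall>i. coord x i = coord x (L i)" unfolding diag_subtorus_def by blast
    then have "coord x (Inl a) = coord x (Inl b)" using ab(2) by metis
    then show ?thesis using x(2) by simp
  qed
  have S_hyperplane: "v $ a = v $ b" if "v \<in> S" for v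
  proof (rule ccontr)
    assume d: "v $ a \<noteq> v $ b"
    define t where "t = 1 / (2 * (v $ a - v $ b))"
    have "(\<chi> j. exp (2 * complex_of_real pi * \<i> * complex_of_real (t * v $ j))) \<in> fst ` diag_subtorus L"
      using that unfolding S_def by blast
    from fst_eq[OF this] have eq: "exp (2 * complex_of_real pi * \<i> * complex_of_real (t * v $ a))
        = exp (2 * complex_of_real pi * \<i> * complex_of_real (t * v $ b))" by simp
    have exp1: "exp (2 * complex_of_real pi * \<i> * complex_of_real (t * v $ a)
        - 2 * complex_of_real pi * \<i> * complex_of_real (t * v $ b)) = 1"
      unfolding exp_diff eq by simp
    have "t * v $ a - t * v $ b = t * (v $ a - v $ b)" by (simp add: algebra_simps)
    also have "\<dots> = 1 / 2" unfolding t_def using d by simp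
    finally have "complex_of_real (t * v $ a) - complex_of_real (t * v $ b) = complex_of_real (1 / 2)"
      unfolding of_real_diff[symmetric] by (rule arg_cong)
    then have "complex_of_real (t * v $ a) - complex_of_real (t * v $ b) = 1 / 2" by simp
    then have arg: "2 * complex_of_real pi * \<i> * complex_of_real (t * v $ a)
        - 2 * complex_of_real pi * \<i> * complex_of_real (t * v $ b)
        = 2 * complex_of_real pi * \<i> * (1 / 2)"
      by (simp only: right_diff_distrib[symmetric])
    have "exp (complex_of_real pi * \<i>) = 1" using exp1 unfolding arg by simp
    then show False by simp
  qed
  have "span S \<subseteq> {v. v $ a = v $ b}"
    by (rule span_minimal) (use S_hyperplane in \<open>auto simp: subspace_def\<close>)
  moreover have "axis a (1::real) \<notin> {v. v $ a = v $ b}" using ab(1) by (simp add: axis_def)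
  ultimately have "dim S \<noteq> DIM(real^'d)" using dim_eq_full[of S] by blast
  then have "dim S < CARD('d)" using dim_subset_UNIV_cart[of S] by simp
  then show ?thesis unfolding lie_dim_def S_def .
qed

definition fibre_sums_vanish :: "('i \<Rightarrow> 'i) \<Rightarrow> ('i \<Rightarrow> complex) \<Rightarrow> bool" where
  "fibre_sums_vanish L g \<longleftrightarrow> (\<forall>j. (\<Sum>i | L i = L j. g i) = 0)"

lemma fibre_sums_vanish_divide:
  assumes "fibre_sums_vanish L g"
  shows "fibre_sums_vanish L (\<lambda>i. g i / h (L i))"
  unfolding fibre_sums_vanish_def
proof
  fix j
  have "(\<Sum>i | L i = L j. g i / h (L i)) = (\<Sum>i | L i = L j. g i) / h (L j)"
    by (simp add: sum_divide_distrib)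
  then show "(\<Sum>i | L i = L j. g i / h (L i)) = 0" using assms unfolding fibre_sums_vanish_def by simp
qed

definition root_point :: "nat \<Rightarrow> ('d + 'd \<Rightarrow> nat) \<Rightarrow> (complex^'d) \<times> (complex^'d)" where
  "root_point K e = of_coords (\<lambda>i. unit_root K ^ e i)"

lemma root_point_tors2:
  assumes "K > 0"
  shows "root_point K e \<in> tors2"
  unfolding tors2_iff torus2_iff root_point_def
  using assms by (auto simp: norm_power unit_root_pow_eq_1_iff simp flip: power_mult intro!: exI[of _ K])

lemma coset2_diag_subtorus_subset_Vset:
  fixes L :: "'d::finite + 'd \<Rightarrow> 'd + 'd"
  assumes p: "fibre_sums_vanish L (signed_coord p)"
  shows "coset2 p (diag_subtorus L) \<subseteq> Vset"
proof
  fix x assume "x \<in> coset2 p (diag_subtorus L)"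
  then obtain y where y: "y \<in> diag_subtorus L" "x = mult2 p y" unfolding coset2_def by blast
  then have "signed_coord x i = signed_coord p i * coord y (L i)" for i
    unfolding diag_subtorus_def signed_coord_def by auto
  then have "(\<Sum>i\<in>UNIV. signed_coord x i)
      = (\<Sum>r\<in>L ` UNIV. \<Sum>i | L i = r. signed_coord p i * coord y (L i))"
    by (simp add: sum.image_gen[of UNIV _ L])
  also have "\<dots> = (\<Sum>r\<in>L ` UNIV. coord y r * (\<Sum>i | L i = r. signed_coord p i))"
    by (intro sum.cong refl) (auto simp: sum_distrib_left mult.commute intro!: sum.cong)
  also have "\<dots> = 0"
    using p unfolding fibre_sums_vanish_def by (intro sum.neutral) auto
  finally show "x \<in> Vset" unfolding Vset_iff .
qed

text \<open>Split the vanishing sum of signed coordinates into minimal vanishing subsums, the fibres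
  of a retraction \<open>L\<close>; by Mann's theorem coordinates in one fibre differ by roots of unity of
  order dividing \<open>(2d)!\<close>.\<close>
lemma tors2_Vset_fibres:
  fixes x :: "(complex^'d::finite) \<times> (complex^'d)" and K :: nat
  assumes x: "x \<in> tors2" "x \<in> Vset" and K: "fact CARD('d + 'd) dvd K"
  obtains L where "\<forall>i. L (L i) = L i" "fibre_sums_vanish L (signed_coord x)"
    "\<forall>i. (coord x i / coord x (L i)) ^ K = 1"
proof -
  obtain L where L: "\<forall>i. L (L i) = L i \<and> minimal_vanishing (signed_coord x) {j. L j = L i}"
    using vanishing_sum_minimal_fibres[of UNIV "signed_coord x"] x(2) unfolding Vset_iff by auto
  then have "fibre_sums_vanish L (signed_coord x)"
    unfolding fibre_sums_vanish_def minimal_vanishing_def by blast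
  moreover have "(coord x i / coord x (L i)) ^ K = 1" for i
  proof -
    obtain n where n: "n > 0" "\<forall>i. coord x i ^ n = 1" using x(1) unfolding tors2_iff by blast
    have "\<forall>k\<in>{j. L j = L i}. (coord x k / coord x (L i)) ^ fact (card {j. L j = L i}) = 1"
      using L n by (intro minimal_vanishing_root_ratio_order[of _ n _ coord_sign])
        (auto simp: signed_coord_def [abs_def])
    moreover have "fact (card {j. L j = L i}) dvd (fact CARD('d + 'd) :: nat)"
      by (rule fact_dvd, rule card_mono) auto
    with K have "fact (card {j. L j = L i}) dvd K" by (rule dvd_trans[rotated])
    ultimately show ?thesis by (auto elim!: dvdE simp: power_mult)
  qed
  ultimately show ?thesis using L that by blast
qed

lemma mem_coset2_root_point:
  fixes L :: "'d::finite + 'd \<Rightarrow> 'd + 'd"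
  assumes x: "x \<in> torus2" and K: "K > 0" and L: "\<forall>i. L (L i) = L i"
    and ratio: "\<forall>i. (coord x i / coord x (L i)) ^ K = 1"
  obtains e where "\<forall>i. e i < K" "\<forall>i. coord (root_point K e) i = coord x i / coord x (L i)"
    "x \<in> coset2 (root_point K e) (diag_subtorus L)"
proof -
  have "\<forall>i. \<exists>k<K. coord x i / coord x (L i) = unit_root K ^ k"
    using root_of_unity_eq_unit_root_pow[OF K] ratio by metis
  then obtain e where e: "\<forall>i. e i < K \<and> coord x i / coord x (L i) = unit_root K ^ e i" by metis
  have x0: "coord x i \<noteq> 0" for i using x unfolding torus2_iff by (metis norm_zero zero_neq_one)
  have e': "coord x i = unit_root K ^ e i * coord x (L i)" for i
  proof -
    have "coord x i / coord x (L i) = unit_root K ^ e i" using e by blast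
    then show ?thesis using x0[of "L i"] by (simp add: divide_eq_eq mult.commute)
  qed
  define y where "y = of_coords (\<lambda>i. coord x (L i))"
  have "y \<in> diag_subtorus L" using x L unfolding diag_subtorus_def torus2_iff y_def by simp
  moreover have "x = mult2 (root_point K e) y"
    unfolding coord_eq_iff root_point_def y_def coord_mult2 coord_of_coords using e' by blast
  ultimately have "x \<in> coset2 (root_point K e) (diag_subtorus L)" unfolding coset2_def by blast
  moreover have "\<forall>i. coord (root_point K e) i = coord x i / coord x (L i)"
    using e unfolding root_point_def by simp
  ultimately show ?thesis using e that by blast
qed

text \<open>If no fibre of \<open>L\<close> contains two \<open>z\<close>-coordinates, then each of the \<open>d\<close> fibres through a
  \<open>z\<close>-coordinate needs a \<open>w\<close>-coordinate to vanish; there are only \<open>d\<close> of those, so every such fibre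
  is a pair \<open>{z\<^sub>a, w\<^sub>g\<^sub>(\<^sub>a\<^sub>)}\<close> with \<open>z\<^sub>a = w\<^sub>g\<^sub>(\<^sub>a\<^sub>)\<close> and \<open>g\<close> a permutation.\<close>
lemma mem_Tperm_if_fibres_separate:
  fixes x :: "(complex^'d::finite) \<times> (complex^'d)" and L :: "'d + 'd \<Rightarrow> 'd + 'd"
  assumes x: "x \<in> torus2" and van: "fibre_sums_vanish L (signed_coord x)"
    and sep: "\<And>a b. L (Inl a) = L (Inl b) \<Longrightarrow> a = b"
  obtains \<sigma> where "\<sigma> permutes UNIV" "x \<in> Tperm \<sigma>"
proof -
  have "\<exists>b. L (Inr b) = L (Inl a)" for a
  proof (rule ccontr)
    assume no_w: "\<nexists>b. L (Inr b) = L (Inl a)"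
    have "i = Inl a" if "L i = L (Inl a)" for i
      using that sep no_w by (cases i) auto
    then have "{i. L i = L (Inl a)} = {Inl a}" by auto
    then have "coord x (Inl a) = 0"
      using van[unfolded fibre_sums_vanish_def, rule_format, of "Inl a"] by (simp add: signed_coord_def)
    then show False using x unfolding torus2_iff by (metis norm_zero zero_neq_one)
  qed
  then obtain g where g: "\<And>a. L (Inr (g a)) = L (Inl a)" by metis
  have "inj g"
  proof (rule injI)
    fix a a' assume "g a = g a'"
    then have "L (Inl a) = L (Inl a')" using g by metis
    then show "a = a'" by (rule sep)
  qed
  then have "bij g" by (simp add: bij_def finite_UNIV_inj_surj)
  have fibre: "{i. L i = L (Inl a)} = {Inl a, Inr (g a)}" for a
  proof -
    have "b = g a" if b: "L (Inr b) = L (Inl a)" for b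
    proof -
      obtain a' where a': "b = g a'" using \<open>bij g\<close> unfolding bij_def surj_def by blast
      then have "L (Inl a') = L (Inl a)" using g b by simp
      then show ?thesis using a' sep by metis
    qed
    then have "i = Inl a \<or> i = Inr (g a)" if "L i = L (Inl a)" for i
      using that sep by (cases i) auto
    then show ?thesis using g by auto
  qed
  have "snd x $ g a = fst x $ a" for a
    using van[unfolded fibre_sums_vanish_def, rule_format, of "Inl a"]
    unfolding fibre signed_coord_def by simp
  then have "x = (fst x, \<chi> j. fst x $ inv g j)"
    using \<open>bij g\<close> by (simp add: prod_eq_iff vec_eq_iff) (metis bij_inv_eq_iff)
  moreover have "fst x \<in> torus" using x unfolding torus2_def by auto
  ultimately have "x \<in> Tperm (inv g)" unfolding Tperm_def by blast
  moreover have "inv g permutes UNIV" using \<open>bij g\<close> by (intro bij_imp_permutes bij_imp_bij_inv) simp_all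
  ultimately show ?thesis using that by blast
qed

text \<open>These pairs index the exceptional cosets \<open>p\<^sub>j \<cdot> T\<^sub>j\<close>.\<close>
definition exceptional_data :: "nat \<Rightarrow> (('d::finite + 'd \<Rightarrow> 'd + 'd) \<times> ('d + 'd \<Rightarrow> nat)) set" where
  "exceptional_data K = {(L, e). (\<forall>i. L (L i) = L i) \<and> (\<exists>a b. a \<noteq> b \<and> L (Inl a) = L (Inl b)) \<and>
      (\<forall>i. e i < K) \<and> fibre_sums_vanish L (signed_coord (root_point K e))}"

lemma finite_exceptional_data: "finite (exceptional_data K :: (('d::finite + 'd \<Rightarrow> _) \<times> _) set)"
proof (rule finite_subset)
  show "exceptional_data K \<subseteq> UNIV \<times> (UNIV \<rightarrow>\<^sub>E {..<K})"
    unfolding exceptional_data_def PiE_UNIV_domain by auto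
qed (intro finite_cartesian_product finite_PiE; simp)

lemma tors2_Vset_eq:
  fixes K :: nat
  assumes K: "K > 0" "fact CARD('d::finite + 'd) dvd K"
  shows "tors2 \<inter> Vset =
    (\<Union>\<sigma>\<in>{\<sigma>. \<sigma> permutes (UNIV :: 'd set)}. tors2 \<inter> Tperm \<sigma>) \<union>
    (\<Union>(L, e)\<in>exceptional_data K. tors2 \<inter> coset2 (root_point K e) (diag_subtorus L))"
  (is "_ = ?P \<union> ?E")
proof
  show "tors2 \<inter> Vset \<subseteq> ?P \<union> ?E"
  proof
    fix x :: "(complex^'d) \<times> (complex^'d)" assume x: "x \<in> tors2 \<inter> Vset"
    then have xt: "x \<in> torus2" unfolding tors2_def by blast
    from x have "x \<in> tors2" "x \<in> Vset" by auto
    then obtain L where L: "\<forall>i. L (L i) = L i" and van: "fibre_sums_vanish L (signed_coord x)"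
      and ratio: "\<forall>i. (coord x i / coord x (L i)) ^ K = 1"
      using K(2) by (rule tors2_Vset_fibres)
    show "x \<in> ?P \<union> ?E"
    proof (cases "\<exists>a b. a \<noteq> b \<and> L (Inl a) = L (Inl b)")
      case True
      obtain e where e: "\<forall>i. e i < K" "\<forall>i. coord (root_point K e) i = coord x i / coord x (L i)"
        and xc: "x \<in> coset2 (root_point K e) (diag_subtorus L)"
        using mem_coset2_root_point[OF xt K(1) L ratio] by blast
      have "signed_coord (root_point K e) = (\<lambda>i. signed_coord x i / coord x (L i))"
        using e(2) by (auto simp: signed_coord_def)
      then have "fibre_sums_vanish L (signed_coord (root_point K e))"
        using fibre_sums_vanish_divide[OF van] by simp
      then have "(L, e) \<in> exceptional_data K"
        unfolding exceptional_data_def using L True e(1) by simp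
      then show ?thesis using x xc by (intro UnI2 UN_I[of "(L, e)"]) auto
    next
      case False
      obtain \<sigma> where "\<sigma> permutes UNIV" "x \<in> Tperm \<sigma>"
        by (rule mem_Tperm_if_fibres_separate[OF xt van]) (use False in blast)
      then show ?thesis using x by (intro UnI1 UN_I[of \<sigma>]) auto
    qed
  qed
  have "?P \<subseteq> tors2 \<inter> Vset"
    using Tperm_subset_Vset by (intro UN_least) auto
  moreover have "tors2 \<inter> coset2 (root_point K e) (diag_subtorus L) \<subseteq> tors2 \<inter> Vset"
    if "(L, e) \<in> exceptional_data K" for L e
  proof -
    have "fibre_sums_vanish L (signed_coord (root_point K e))"
      using that unfolding exceptional_data_def by simp
    then show ?thesis using coset2_diag_subtorus_subset_Vset by blast
  qed
  then have "?E \<subseteq> tors2 \<inter> Vset" by (intro UN_least) auto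
  ultimately show "?P \<union> ?E \<subseteq> tors2 \<inter> Vset" by (rule Un_least)
qed

theorem lemma4p4:
  shows "\<exists>(m::nat) (T :: nat \<Rightarrow> ((complex^'d::finite) \<times> (complex^'d)) set) p.
     (\<forall>j<m. closed_connected_subgroup2 (T j) \<and> lie_dim (fst ` T j) < CARD('d)) \<and>
     (\<forall>j<m. p j \<in> tors2) \<and>
     tors2 \<inter> Vset =
       (\<Union>\<sigma>\<in>{\<sigma>. \<sigma> permutes (UNIV :: 'd set)}. tors2 \<inter> Tperm \<sigma>) \<union>
       (\<Union>j<m. tors2 \<inter> coset2 (p j) (T j))"
proof -
  define K :: nat where "K = fact CARD('d + 'd)"
  have K: "K > 0" "fact CARD('d + 'd) dvd K" unfolding K_def by simp_all
  obtain m and g :: "nat \<Rightarrow> ('d + 'd \<Rightarrow> 'd + 'd) \<times> ('d + 'd \<Rightarrow> nat)"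
    where g: "exceptional_data K = g ` {..<m}"
    using finite_exceptional_data finite_imp_nat_seg_image_inj_on lessThan_def by metis
  define T where "T j = diag_subtorus (fst (g j))" for j
  define p where "p j = root_point K (snd (g j))" for j
  have "closed_connected_subgroup2 (T j) \<and> lie_dim (fst ` T j) < CARD('d) \<and> p j \<in> tors2"
    if "j < m" for j
  proof -
    have "g j \<in> exceptional_data K" using g that by blast
    then show ?thesis
      unfolding T_def p_def exceptional_data_def K_def
      by (auto intro: closed_connected_subgroup2_diag_subtorus lie_dim_diag_subtorus_less root_point_tors2)
  qed
  moreover have "tors2 \<inter> Vset =
       (\<Union>\<sigma>\<in>{\<sigma>. \<sigma> permutes (UNIV :: 'd set)}. tors2 \<inter> Tperm \<sigma>) \<union>
       (\<Union>j<m. tors2 \<inter> coset2 (p j) (T j))"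
    unfolding tors2_Vset_eq[OF K] g T_def p_def by (simp add: case_prod_beta)
  ultimately show ?thesis by blast
qed

end
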